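(* Let $c$ and $n$ be odd positive integers with $n>c$. Consider lattice paths in an $(n-c-1)\times(n-c-1)$ grid from the top-left corner to the bottom-right corner, using unit right and down steps and never going strictly below the diagonal joining these two corners. Then the number of such paths with an even number of unit squares of the grid lying above the path exceeds the number with an odd number of such squares by $C_{\frac{n-c-2}{2}}$, where $C_r=\frac{1}{r+1}\binom{2r}{r}$ is the $r$th Catalan number. *)

theory Defs
  imports Complex_Main
begin

text \<open>A lattice path in an m x m grid from the top-left to the bottom-right corner is
encoded as a list of steps: True = unit step right, False = unit step down.\<close>

definition rights :: "bool list \<Rightarrow> nat" where
  "rights p = length (filter (\<lambda>s. s) p)"

definition downs :: "bool list \<Rightarrow> nat" where
  "downs p = length (filter (\<lambda>s. \<not> s) p)"

text \<open>Paths never going strictly below the diagonal joining the top-left and the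
bottom-right corner: after every prefix, the number of down steps does not exceed
the number of right steps.\<close>

definition grid_paths :: "nat \<Rightarrow> bool list set" where
  "grid_paths m = {p. length p = 2 * m \<and> rights p = m \<and> downs p = m \<and>
      (\<forall>k \<le> length p. downs (take k p) \<le> rights (take k p))}"

text \<open>Number of unit squares of the grid lying above the path: a down step taken
at horizontal position x (= number of right steps before it) has the m - x squares of
its row to its right, i.e. above the path.\<close>

definition squares_above :: "nat \<Rightarrow> bool list \<Rightarrow> nat" where
  "squares_above m p = (\<Sum>i\<in>{i. i < length p \<and> \<not> p ! i}. m - rights (take i p))"

definition catalan :: "nat \<Rightarrow> real" where
  "catalan r = (1 / real (r + 1)) * real ((2 * r) choose r)"

end

theory Submission
  imports Defs
begin

text \<open>On a path in the (m x m)-grid, the squares above the path and the squares to its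
left add up to m^2, which is odd here; so the difference in question is minus the
signed count of the paths by the parity of the squares to their left. We compute this
signed count for ballot paths ending at an arbitrary lattice point (a, b): splitting off
the last step gives the recurrence S(a, b) = S(a - 1, b) + (-1)^a S(a, b - 1), since a
final down step adds a squares to the left. Its solution is made of ballot numbers: in
odd rows a = 2i + 1 one has S(a, b) = (-1)^b B(i, floor(b/2)), in even rows a = 2i + 2
one has S(a, 2j) = B(i, j) and S(a, 2j + 1) = 0, and the ballot recurrence of B is exactly
what makes this consistent. On the diagonal B(r, r) is the Catalan number.\<close>

lemma rights_simps [simp]:
  "rights [] = 0" "rights (xs @ ys) = rights xs + rights ys"
  "rights [True] = 1" "rights [False] = 0"
  by (simp_all add: rights_def)

lemma downs_simps [simp]:
  "downs [] = 0" "downs (xs @ ys) = downs xs + downs ys"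
  "downs [True] = 0" "downs [False] = 1"
  by (simp_all add: downs_def)

lemma rights_plus_downs: "rights p + downs p = length p"
  unfolding rights_def downs_def by (induction p) auto

lemma rights_take_le: "rights (take i p) \<le> rights p"
  using rights_simps(2)[of "take i p" "drop i p"] by simp


definition weakly_above_diagonal :: "bool list \<Rightarrow> bool" where
  "weakly_above_diagonal p \<longleftrightarrow> (\<forall>k \<le> length p. downs (take k p) \<le> rights (take k p))"

lemma weakly_above_diagonal_snoc:
  "weakly_above_diagonal (q @ [x]) \<longleftrightarrow>
     weakly_above_diagonal q \<and> downs (q @ [x]) \<le> rights (q @ [x])"
  unfolding weakly_above_diagonal_def by (auto simp: le_Suc_eq)

lemma weakly_above_diagonal_downs_le: "weakly_above_diagonal p \<Longrightarrow> downs p \<le> rights p"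
  unfolding weakly_above_diagonal_def by (metis order_refl take_all)

definition ballot_paths :: "nat \<Rightarrow> nat \<Rightarrow> bool list set" where
  "ballot_paths a b = {p. rights p = a \<and> downs p = b \<and> weakly_above_diagonal p}"

lemma grid_paths_eq_ballot_paths: "grid_paths m = ballot_paths m m"
proof -
  have "length p = 2 * m" if "rights p = m" "downs p = m" for p
    using rights_plus_downs[of p] that by simp
  then show ?thesis
    unfolding grid_paths_def ballot_paths_def weakly_above_diagonal_def by blast
qed

lemma finite_ballot_paths: "finite (ballot_paths a b)"
proof (rule finite_subset)
  show "ballot_paths a b \<subseteq> {p. set p \<subseteq> UNIV \<and> length p = a + b}"
    using rights_plus_downs by (auto simp: ballot_paths_def)
  show "finite {p :: bool list. set p \<subseteq> UNIV \<and> length p = a + b}"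
    by (rule finite_lists_length_eq) simp
qed

lemma ballot_paths_empty: "a < b \<Longrightarrow> ballot_paths a b = {}"
  unfolding ballot_paths_def using weakly_above_diagonal_downs_le by force

lemma ballot_paths_0_0: "ballot_paths 0 0 = {[]}"
proof -
  have "p \<in> ballot_paths 0 0 \<longleftrightarrow> p = []" for p
  proof
    assume "p \<in> ballot_paths 0 0"
    then show "p = []"
      using rights_plus_downs[of p] by (simp add: ballot_paths_def)
  qed (simp add: ballot_paths_def weakly_above_diagonal_def)
  then show ?thesis
    by blast
qed

lemma ballot_paths_by_last_step:
  assumes "0 < a + b"
  shows "ballot_paths a b =
           (\<lambda>q. q @ [True]) ` (if 0 < a then ballot_paths (a - 1) b else {})
         \<union> (\<lambda>q. q @ [False]) ` (if 0 < b \<and> b \<le> a then ballot_paths a (b - 1) else {})"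
  (is "?L = ?R")
proof
  show "?L \<subseteq> ?R"
  proof
    fix p assume p: "p \<in> ?L"
    then have "p \<noteq> []"
      using assms by (auto simp: ballot_paths_def)
    then obtain q x where q: "p = q @ [x]"
      by (metis rev_exhaust)
    have "rights q + (if x then 1 else 0) = a" "downs q + (if x then 0 else 1) = b"
      "weakly_above_diagonal q" "downs p \<le> rights p"
      using p q by (auto simp: ballot_paths_def weakly_above_diagonal_snoc)
    then show "p \<in> ?R"
      unfolding q by (cases x) (auto simp: ballot_paths_def)
  qed
  have "q @ [True] \<in> ?L" if "0 < a" "q \<in> ballot_paths (a - 1) b" for q
    using that weakly_above_diagonal_downs_le[of q]
    by (auto simp: ballot_paths_def weakly_above_diagonal_snoc)
  moreover have "q @ [False] \<in> ?L" if "0 < b" "b \<le> a" "q \<in> ballot_paths a (b - 1)" for q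
    using that by (auto simp: ballot_paths_def weakly_above_diagonal_snoc)
  ultimately show "?R \<subseteq> ?L"
    by (auto split: if_splits)
qed


definition squares_left :: "bool list \<Rightarrow> nat" where
  "squares_left p = (\<Sum>i<length p. if p ! i then 0 else rights (take i p))"

lemma squares_left_snoc: "squares_left (q @ [x]) = squares_left q + (if x then 0 else rights q)"
proof -
  have "squares_left (q @ [x]) =
      (\<Sum>i<length q. if (q @ [x]) ! i then 0 else rights (take i (q @ [x])))
      + (if x then 0 else rights q)"
    unfolding squares_left_def by simp
  also have "(\<Sum>i<length q. if (q @ [x]) ! i then 0 else rights (take i (q @ [x]))) = squares_left q"
    unfolding squares_left_def by (rule sum.cong) (auto simp: nth_append)
  finally show ?thesis .
qed

lemma squares_above_plus_squares_left:
  assumes "p \<in> ballot_paths m m"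
  shows "squares_above m p + squares_left p = m * m"
proof -
  let ?D = "{i \<in> {..<length p}. \<not> p ! i}"
  have "squares_left p = (\<Sum>i<length p. if \<not> p ! i then rights (take i p) else 0)"
    unfolding squares_left_def by (intro sum.cong) auto
  also have "\<dots> = (\<Sum>i\<in>?D. rights (take i p))"
    by (rule sum.inter_filter[symmetric]) simp
  finally have "squares_left p = (\<Sum>i\<in>?D. rights (take i p))" .
  moreover have "squares_above m p = (\<Sum>i\<in>?D. m - rights (take i p))"
    unfolding squares_above_def by (intro sum.cong) auto
  ultimately have "squares_above m p + squares_left p = (\<Sum>i\<in>?D. (m - rights (take i p)) + rights (take i p))"
    by (simp add: sum.distrib)
  also have "\<dots> = (\<Sum>i\<in>?D. m)"
    using assms rights_take_le[of _ p] by (intro sum.cong) (auto simp: ballot_paths_def)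
  also have "\<dots> = card ?D * m"
    by simp
  also have "card ?D = downs p"
    unfolding downs_def by (simp add: length_filter_conv_card)
  finally show ?thesis
    using assms by (simp add: ballot_paths_def)
qed

definition signed_count :: "nat \<Rightarrow> nat \<Rightarrow> int" where
  "signed_count a b = (\<Sum>p\<in>ballot_paths a b. (-1) ^ squares_left p)"

lemma signed_count_rec:
  assumes "0 < a" "b \<le> a"
  shows "signed_count a b =
           signed_count (a - 1) b + (if 0 < b then (-1) ^ a * signed_count a (b - 1) else 0)"
proof -
  have inj: "inj_on (\<lambda>q. q @ [x]) A" for x :: bool and A :: "bool list set"
    by (rule inj_onI) simp
  let ?T = "(\<lambda>q. q @ [True]) ` ballot_paths (a - 1) b"
  let ?F = "(\<lambda>q. q @ [False]) ` (if 0 < b then ballot_paths a (b - 1) else {})"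
  have "ballot_paths a b = ?T \<union> ?F"
    using ballot_paths_by_last_step[of a b] assms by simp
  moreover have "?T \<inter> ?F = {}"
    by auto
  ultimately have "signed_count a b
      = (\<Sum>p\<in>?T. (-1) ^ squares_left p) + (\<Sum>p\<in>?F. (-1) ^ squares_left p)"
    unfolding signed_count_def by (simp add: sum.union_disjoint finite_ballot_paths)
  also have "(\<Sum>p\<in>?T. (-1::int) ^ squares_left p) = signed_count (a - 1) b"
    by (simp add: sum.reindex[OF inj] squares_left_snoc signed_count_def)
  also have "(\<Sum>p\<in>?F. (-1::int) ^ squares_left p)
      = (if 0 < b then (-1) ^ a * signed_count a (b - 1) else 0)"
  proof (cases "0 < b")
    case True
    have "(\<Sum>q\<in>ballot_paths a (b - 1). (-1::int) ^ squares_left (q @ [False]))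
        = (\<Sum>q\<in>ballot_paths a (b - 1). (-1) ^ a * (-1) ^ squares_left q)"
      by (rule sum.cong) (auto simp: squares_left_snoc ballot_paths_def power_add)
    then show ?thesis
      using True by (simp add: sum.reindex[OF inj] signed_count_def sum_distrib_left)
  qed simp
  finally show ?thesis .
qed


text \<open>Reflection-principle form of ((i + 1 - j) / (i + 1)) C(i + j, j), the number of
lattice paths from (0, 0) to (i, j) never having more down than right steps.\<close>

definition ballot_number :: "nat \<Rightarrow> nat \<Rightarrow> int" where
  "ballot_number i j = int ((i + j) choose j) - int ((i + j) choose Suc i)"

lemma ballot_number_0 [simp]: "ballot_number i 0 = 1"
  by (simp add: ballot_number_def)

lemma ballot_number_Suc_self [simp]: "ballot_number i (Suc i) = 0"
  by (simp add: ballot_number_def)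

lemma ballot_number_Suc_Suc:
  "ballot_number (Suc i) (Suc j) = ballot_number i (Suc j) + ballot_number (Suc i) j"
  by (simp add: ballot_number_def)

lemma ballot_number_diag: "real_of_int (ballot_number r r) = catalan r"
proof -
  have "Suc r * (2 * r choose Suc r) = 2 * r * ((2 * r - 1) choose r)"
    by (rule binomial_absorption)
  also have "\<dots> = (2 * r - r) * (2 * r choose r)"
    by (rule binomial_absorb_comp[symmetric])
  finally have "Suc r * (2 * r choose Suc r) = r * (2 * r choose r)"
    by simp
  then have absorb: "(real r + 1) * real (2 * r choose Suc r) = real r * real (2 * r choose r)"
    by (metis of_nat_Suc of_nat_mult add.commute)
  have "real_of_int (ballot_number r r) = real (2 * r choose r) - real (2 * r choose Suc r)"
    by (simp add: ballot_number_def mult_2)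
  also have "\<dots> = real (2 * r choose r) / (real r + 1)"
    using absorb by (simp add: field_simps)
  finally show ?thesis
    by (simp add: catalan_def)
qed

text \<open>For a = 0 the junk value a div 2 - 1 = 0 still gives the right value 1.\<close>

definition signed_ballot_number :: "nat \<Rightarrow> nat \<Rightarrow> int" where
  "signed_ballot_number a b =
     (if a < b then 0
      else if odd a then (-1) ^ b * ballot_number (a div 2) (b div 2)
      else if odd b then 0
      else ballot_number (a div 2 - 1) (b div 2))"

lemma signed_ballot_number_rec:
  assumes "0 < a" "b \<le> a"
  shows "signed_ballot_number a b =
           signed_ballot_number (a - 1) b
           + (if 0 < b then (-1) ^ a * signed_ballot_number a (b - 1) else 0)"
proof -
  have "\<exists>i. a = Suc (2 * i) \<or> a = 2 * Suc i"
    using \<open>0 < a\<close> by presburger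
  moreover have "\<exists>j. b = 2 * j \<or> b = Suc (2 * j)"
    by presburger
  ultimately obtain i j where
    "a = Suc (2 * i) \<and> b = 2 * j \<or> a = Suc (2 * i) \<and> b = Suc (2 * j)
     \<or> a = 2 * Suc i \<and> b = 2 * j \<or> a = 2 * Suc i \<and> b = Suc (2 * j)"
    by blast
  then consider
      "a = Suc (2 * i)" "b = 2 * j" | "a = Suc (2 * i)" "b = Suc (2 * j)"
    | "a = 2 * Suc i" "b = 2 * j" | "a = 2 * Suc i" "b = Suc (2 * j)"
    by blast
  then show ?thesis
  proof cases
    case 1
    show ?thesis
    proof (cases j)
      case (Suc j')
      with 1 assms obtain i' where "i = Suc i'"
        by (cases i) auto
      with 1 Suc assms show ?thesis
        by (simp add: signed_ballot_number_def ballot_number_Suc_Suc)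
    qed (use 1 in \<open>simp add: signed_ballot_number_def\<close>)
  next
    case 2
    with assms show ?thesis
      by (simp add: signed_ballot_number_def)
  next
    case 3
    with assms show ?thesis
      by (cases "j = Suc i") (auto simp: signed_ballot_number_def)
  next
    case 4
    with assms show ?thesis
      by (simp add: signed_ballot_number_def)
  qed
qed

lemma signed_count_eq_signed_ballot_number: "signed_count a b = signed_ballot_number a b"
proof (induction "a + b" arbitrary: a b rule: less_induct)
  case less
  consider "a < b" | "a = 0" "b = 0" | "0 < a" "b \<le> a"
    by linarith
  then show ?case
  proof cases
    case 1
    then show ?thesis
      by (simp add: signed_count_def ballot_paths_empty signed_ballot_number_def)
  next
    case 2
    then show ?thesis
      by (simp add: signed_count_def ballot_paths_0_0 squares_left_def signed_ballot_number_def)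
  next
    case 3
    then show ?thesis
      using less signed_count_rec signed_ballot_number_rec by simp
  qed
qed

lemma sum_neg_one_power_eq_card_diff:
  assumes "finite A"
  shows "(\<Sum>x\<in>A. (-1::'a::ring_1) ^ f x)
           = of_nat (card {x\<in>A. even (f x)}) - of_nat (card {x\<in>A. odd (f x)})"
proof -
  have "(\<Sum>x\<in>A. (-1::'a) ^ f x) = (\<Sum>x\<in>A. if even (f x) then 1 else - 1)"
    by (intro sum.cong) auto
  also have "\<dots> = of_nat (card {x\<in>A. even (f x)}) - of_nat (card {x\<in>A. odd (f x)})"
    using assms by (simp add: sum.If_cases Int_def Collect_neg_eq[symmetric] conj_commute)
  finally show ?thesis .
qed

theorem lemma2p20:
  fixes c n :: nat
  assumes "odd c" and "odd n" and "n > c"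
  shows "real (card {p \<in> grid_paths (n - c - 1). even (squares_above (n - c - 1) p)})
       - real (card {p \<in> grid_paths (n - c - 1). odd (squares_above (n - c - 1) p)})
       = catalan ((n - c - 2) div 2)"
proof -
  define m where "m = n - c - 1"
  define r where "r = (n - c - 2) div 2"
  have m: "m = Suc (2 * r)"
    using assms unfolding m_def r_def by presburger
  have parity: "(-1::real) ^ squares_above m p = - ((-1) ^ squares_left p)"
    if "p \<in> ballot_paths m m" for p
  proof -
    have "odd (squares_above m p + squares_left p)"
      using squares_above_plus_squares_left[OF that] m by simp
    then show ?thesis
      by auto
  qed
  have "real (card {p \<in> grid_paths m. even (squares_above m p)})
        - real (card {p \<in> grid_paths m. odd (squares_above m p)})
      = (\<Sum>p\<in>ballot_paths m m. (-1::real) ^ squares_above m p)"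
    by (simp add: sum_neg_one_power_eq_card_diff finite_ballot_paths grid_paths_eq_ballot_paths)
  also have "\<dots> = - real_of_int (signed_count m m)"
    by (simp add: parity signed_count_def sum_negf)
  also have "\<dots> = real_of_int (ballot_number r r)"
    by (simp add: signed_count_eq_signed_ballot_number signed_ballot_number_def m)
  also have "\<dots> = catalan r"
    by (rule ballot_number_diag)
  finally show ?thesis
    unfolding m_def r_def .
qed

end
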